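(* Let $\theta\in\mathbb{R}_{\ge0}^V$ be a feasible solution in a general weighted graph on $n=|V|$ vertices. Then $\|W\theta\|_1\ge n+\frac{\|\theta\|_1-\mathsf{OPT}}{\mathsf{OPT}}$.
   Context: $W=(W_{u,v})_{u,v\in V}$ is a symmetric matrix with entries in $[0,1]$ and $W_{v,v}=1$ (the weighted graph). A vector $\theta\in\mathbb{R}_{\ge0}^V$ is feasible if $W\theta\ge\mathbf 1$ coordinatewise. $\mathsf{OPT}=\min\{\|\theta\|_1:\theta\ge0,\ W\theta\ge\mathbf 1\}$. *)

theory Defs
  imports Main "HOL-Analysis.Analysis"
begin

definition weighted_graph :: "('v::finite \<Rightarrow> 'v \<Rightarrow> real) \<Rightarrow> bool" where
  "weighted_graph W \<longleftrightarrow> (\<forall>u v. W u v = W v u) \<and> (\<forall>u v. 0 \<le> W u v \<and> W u v \<le> 1) \<and> (\<forall>v. W v v = 1)"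

definition Wmul :: "('v::finite \<Rightarrow> 'v \<Rightarrow> real) \<Rightarrow> ('v \<Rightarrow> real) \<Rightarrow> 'v \<Rightarrow> real" where
  "Wmul W \<theta> u = (\<Sum>v\<in>UNIV. W u v * \<theta> v)"

definition l1norm :: "('v::finite \<Rightarrow> real) \<Rightarrow> real" where
  "l1norm x = (\<Sum>v\<in>UNIV. \<bar>x v\<bar>)"

definition feasible :: "('v::finite \<Rightarrow> 'v \<Rightarrow> real) \<Rightarrow> ('v \<Rightarrow> real) \<Rightarrow> bool" where
  "feasible W \<theta> \<longleftrightarrow> (\<forall>v. 0 \<le> \<theta> v) \<and> (\<forall>u. 1 \<le> Wmul W \<theta> u)"

definition OPT :: "('v::finite \<Rightarrow> 'v \<Rightarrow> real) \<Rightarrow> real" where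
  "OPT W = Inf {l1norm \<theta> | \<theta>. feasible W \<theta>}"

end

theory Submission
  imports Defs
begin

text \<open>Let \<open>c\<close> be the largest entry of \<open>W\<theta>\<close>. For symmetric \<open>W\<close> and any feasible \<open>\<phi>\<close>,
  weak duality gives \<open>\<parallel>\<theta>\<parallel>\<^sub>1 \<le> \<theta>\<^sup>T W \<phi> = \<phi>\<^sup>T W \<theta> \<le> c \<parallel>\<phi>\<parallel>\<^sub>1\<close>, hence
  \<open>\<parallel>\<theta>\<parallel>\<^sub>1 / OPT \<le> c\<close>. On the other hand every entry of \<open>W\<theta>\<close> is at least 1, so
  \<open>\<parallel>W\<theta>\<parallel>\<^sub>1 \<ge> c + (n - 1) \<ge> n + \<parallel>\<theta>\<parallel>\<^sub>1 / OPT - 1\<close>.\<close>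

lemma l1norm_nonneg_eq_sum: "(\<And>v. 0 \<le> x v) \<Longrightarrow> l1norm x = (\<Sum>v\<in>UNIV. x v)"
  unfolding l1norm_def by simp

lemma sum_mult_Wmul_commute:
  fixes W :: "'v::finite \<Rightarrow> 'v \<Rightarrow> real"
  assumes "\<And>u v. W u v = W v u"
  shows "(\<Sum>u\<in>UNIV. \<theta> u * Wmul W \<phi> u) = (\<Sum>v\<in>UNIV. \<phi> v * Wmul W \<theta> v)"
proof -
  have "(\<Sum>u\<in>UNIV. \<theta> u * Wmul W \<phi> u) = (\<Sum>u\<in>UNIV. \<Sum>v\<in>UNIV. \<theta> u * W u v * \<phi> v)"
    unfolding Wmul_def by (simp add: sum_distrib_left mult.assoc)
  also have "\<dots> = (\<Sum>v\<in>UNIV. \<Sum>u\<in>UNIV. \<theta> u * W u v * \<phi> v)"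
    by (rule sum.swap)
  also have "\<dots> = (\<Sum>v\<in>UNIV. \<phi> v * Wmul W \<theta> v)"
    unfolding Wmul_def
    by (simp add: sum_distrib_left assms mult.commute mult.left_commute)
  finally show ?thesis .
qed

lemma feasible_l1norm_le_mult_l1norm:
  fixes W :: "'v::finite \<Rightarrow> 'v \<Rightarrow> real"
  assumes sym: "\<And>u v. W u v = W v u"
    and \<theta>: "feasible W \<theta>" and \<phi>: "feasible W \<phi>"
    and c: "\<And>u. Wmul W \<theta> u \<le> c"
  shows "l1norm \<theta> \<le> c * l1norm \<phi>"
proof -
  have \<theta>_nonneg: "\<And>v. 0 \<le> \<theta> v" and \<phi>_nonneg: "\<And>v. 0 \<le> \<phi> v"
    and \<phi>_cover: "\<And>u. 1 \<le> Wmul W \<phi> u"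
    using \<theta> \<phi> unfolding feasible_def by auto
  have "(\<Sum>u\<in>UNIV. \<theta> u) \<le> (\<Sum>u\<in>UNIV. \<theta> u * Wmul W \<phi> u)"
    using \<theta>_nonneg \<phi>_cover by (intro sum_mono) (metis mult.right_neutral mult_left_mono)
  also have "\<dots> = (\<Sum>v\<in>UNIV. \<phi> v * Wmul W \<theta> v)"
    using sym by (rule sum_mult_Wmul_commute)
  also have "\<dots> \<le> (\<Sum>v\<in>UNIV. \<phi> v * c)"
    using \<phi>_nonneg c by (intro sum_mono) (simp add: mult_left_mono)
  also have "\<dots> = c * (\<Sum>v\<in>UNIV. \<phi> v)"
    by (simp add: sum_distrib_left mult.commute)
  finally show ?thesis
    by (simp add: l1norm_nonneg_eq_sum \<theta>_nonneg \<phi>_nonneg)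
qed

lemma feasible_l1norm_le_OPT:
  fixes W :: "'v::finite \<Rightarrow> 'v \<Rightarrow> real"
  assumes sym: "\<And>u v. W u v = W v u"
    and \<theta>: "feasible W \<theta>"
    and c: "\<And>u. Wmul W \<theta> u \<le> c"
  shows "l1norm \<theta> \<le> c * OPT W"
proof -
  have "1 \<le> c"
    using \<theta> c unfolding feasible_def by (meson order.trans)
  have "l1norm \<theta> / c \<le> OPT W"
    unfolding OPT_def
  proof (rule cInf_greatest)
    show "{l1norm \<phi> |\<phi>. feasible W \<phi>} \<noteq> {}"
      using \<theta> by auto
  next
    fix x assume "x \<in> {l1norm \<phi> |\<phi>. feasible W \<phi>}"
    then obtain \<phi> where "x = l1norm \<phi>" and "feasible W \<phi>" by blast
    then show "l1norm \<theta> / c \<le> x"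
      using feasible_l1norm_le_mult_l1norm[OF sym \<theta> _ c] \<open>1 \<le> c\<close> by (simp add: divide_le_eq mult.commute)
  qed
  then show ?thesis
    using \<open>1 \<le> c\<close> by (simp add: divide_le_eq mult.commute)
qed

lemma feasible_l1norm_pos:
  assumes "feasible W \<theta>"
  shows "0 < l1norm \<theta>"
proof -
  have nonneg: "\<And>v. 0 \<le> \<theta> v" and cover: "\<And>u. 1 \<le> Wmul W \<theta> u"
    using assms unfolding feasible_def by auto
  have "\<theta> \<noteq> (\<lambda>_. 0)"
    using cover[of undefined] unfolding Wmul_def by auto
  then have "(\<Sum>v\<in>UNIV. \<theta> v) \<noteq> 0"
    using nonneg by (auto simp: sum_nonneg_eq_0_iff)
  then show ?thesis
    using nonneg l1norm_nonneg_eq_sum[of \<theta>] sum_nonneg[of UNIV \<theta>] by fastforce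
qed

lemma sum_ge_term_plus_card:
  fixes f :: "'a \<Rightarrow> real"
  assumes "finite A" and "a \<in> A" and "\<And>x. x \<in> A \<Longrightarrow> 1 \<le> f x"
  shows "f a + (real (card A) - 1) \<le> sum f A"
proof -
  have "1 \<le> card A"
    using assms(1,2) by (metis One_nat_def Suc_leI card_gt_0_iff empty_iff)
  then have "real (card A) - 1 = (\<Sum>x\<in>A - {a}. 1)"
    using assms(1,2) by (simp add: card_Diff_singleton)
  also have "\<dots> \<le> (\<Sum>x\<in>A - {a}. f x)"
    using assms(3) by (intro sum_mono) auto
  finally show ?thesis
    using sum.remove[OF assms(1,2), of f] by linarith
qed

theorem lemma7p5:
  fixes W :: "'v::finite \<Rightarrow> 'v \<Rightarrow> real" and \<theta> :: "'v \<Rightarrow> real"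
  assumes "weighted_graph W"
    and "feasible W \<theta>"
  shows "l1norm (Wmul W \<theta>) \<ge> real CARD('v) + (l1norm \<theta> - OPT W) / OPT W"
proof -
  have sym: "\<And>u v. W u v = W v u"
    using assms(1) unfolding weighted_graph_def by auto
  have cover: "\<And>u. 1 \<le> Wmul W \<theta> u"
    using assms(2) unfolding feasible_def by auto
  define c where "c = Max (range (Wmul W \<theta>))"
  have c_ge: "\<And>u. Wmul W \<theta> u \<le> c"
    unfolding c_def by simp
  have "c \<in> range (Wmul W \<theta>)"
    unfolding c_def by (rule Max_in) auto
  then obtain u0 where u0: "Wmul W \<theta> u0 = c"
    by auto
  have le_OPT: "l1norm \<theta> \<le> c * OPT W"
    using sym assms(2) c_ge by (rule feasible_l1norm_le_OPT)
  have "0 < c * OPT W" and "1 \<le> c"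
    using le_OPT feasible_l1norm_pos[OF assms(2)] cover[of u0] u0 by auto
  then have "0 < OPT W"
    by (simp add: zero_less_mult_iff)
  then have "(l1norm \<theta> - OPT W) / OPT W \<le> c - 1"
    using le_OPT by (simp add: diff_divide_distrib divide_le_eq mult.commute)
  moreover have "c + (real CARD('v) - 1) \<le> l1norm (Wmul W \<theta>)"
    using sum_ge_term_plus_card[of UNIV u0 "Wmul W \<theta>"] cover u0
    by (simp add: l1norm_nonneg_eq_sum order.trans[OF zero_le_one])
  ultimately show ?thesis by linarith
qed

end
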